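(* Let $a,b\in\mathbb{N}$ with $a\equiv b\equiv 1\pmod 2$ (no coprimality assumed). Then $$s_{5}(a,b)+s_{5}(b,a)=\frac{1}{2}-\frac{(a,b)^{2}}{2ab}.$$
   Context: For $a,b\in\mathbb{Z}$ with $b\neq0$, the Hardy–Berndt sum is $s_{5}(a,b)=\sum_{r=0}^{|b|-1}(-1)^{r+[\frac{ar}{b}]}\left(\left(\frac{r}{b}\right)\right)$, where $[x]$ is the floor of $x$, $\{x\}=x-[x]$, and $((x))=\{x\}-\tfrac12$ for $x\notin\mathbb{Z}$, $((x))=0$ for $x\in\mathbb{Z}$. $(a,b)$ is the greatest common divisor. *)

theory Defs
  imports Complex_Main
begin

definition sawtooth :: "real \<Rightarrow> real" where
  "sawtooth x = (if x \<in> \<int> then 0 else frac x - 1/2)"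

definition s5 :: "int \<Rightarrow> int \<Rightarrow> real" where
  "s5 a b = (\<Sum>r\<in>{0..<\<bar>b\<bar>}.
      (-1) ^ nat (r + \<lfloor>real_of_int (a * r) / real_of_int b\<rfloor> mod 2)
      * sawtooth (real_of_int r / real_of_int b))"

end

theory Submission
  imports Defs "HOL-Number_Theory.Cong"
begin

text \<open>
  Put \<open>N = a b\<close> and \<open>h n = (-1) ^ (n div a + n div b)\<close>. Substituting \<open>n = a r\<close>,
  resp. \<open>n = b r\<close>, turns \<open>s5 a b + s5 b a\<close> into the sum over \<open>n < N\<close> of
  \<open>([a dvd n] + [b dvd n]) h n ((n / N))\<close>. As \<open>a\<close> and \<open>b\<close> are odd, \<open>h\<close> changes sign
  at \<open>n\<close> exactly when one of them divides \<open>n\<close>, so the weight \<open>([a dvd n] + [b dvd n]) h n\<close>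
  is the jump \<open>(h n - h (n - 1)) / 2\<close> plus a correction at the common multiples.
  Abel summation then leaves \<open>1/2 - (\<Sum>n<N. h n) / (2 N)\<close>. Finally
  \<open>(\<Sum>n<N. h n) = gcd a b ^ 2\<close>: scaling \<open>a, b\<close> by \<open>d\<close> multiplies the sum by \<open>d ^ 2\<close>,
  and for coprime \<open>a, b\<close> the Chinese remainder theorem factors it as
  \<open>(\<Sum>r<a. (-1) ^ r) * (\<Sum>s<b. (-1) ^ s) = 1\<close>.
\<close>

definition div_sign :: "nat \<Rightarrow> nat \<Rightarrow> nat \<Rightarrow> real" where
  "div_sign a b n = (-1) ^ (n div a + n div b)"

lemma div_sign_commute: "div_sign b a = div_sign a b"
  by (rule ext) (simp add: div_sign_def add.commute)

lemma div_sign_mult_scale: "div_sign (d * a) (d * b) n = div_sign a b (n div d)"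
  by (simp add: div_sign_def div_mult2_eq)

lemma minus_one_power_div_odd:
  assumes "odd a"
  shows "(-1::real) ^ (n div a) = (-1) ^ n * (-1) ^ (n mod a)"
proof -
  have "(-1::real) ^ n = ((-1) ^ a) ^ (n div a) * (-1) ^ (n mod a)"
    by (metis div_mult_mod_eq power_add power_mult mult.commute)
  also have "\<dots> = (-1) ^ (n div a) * (-1) ^ (n mod a)"
    using assms by simp
  finally show ?thesis
    by (simp add: minus_one_power_iff)
qed

lemma div_sign_odd_eq_mod:
  assumes "odd a" "odd b"
  shows "div_sign a b n = (-1) ^ (n mod a) * (-1) ^ (n mod b)"
  unfolding div_sign_def power_add minus_one_power_div_odd[OF assms(1)]
    minus_one_power_div_odd[OF assms(2)]
  by (simp add: minus_one_power_iff)

lemma div_sign_periodic: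
  assumes "odd a" "odd b"
  shows "div_sign a b (n + a * b) = div_sign a b n"
  using assms by (simp add: div_sign_odd_eq_mod)

lemma div_sign_pred_mult:
  assumes "odd a" "odd b"
  shows "div_sign a b (a * b - 1) = 1"
proof -
  have "0 < a" "0 < b"
    using assms by (auto intro: odd_pos)
  have "(a * b - 1) mod a = a - 1"
    using mod_mult_self2[of "a - 1" a "b - 1"] \<open>0 < a\<close> \<open>0 < b\<close>
    by (simp add: algebra_simps)
  moreover have "(a * b - 1) mod b = b - 1"
    using mod_mult_self2[of "b - 1" b "a - 1"] \<open>0 < a\<close> \<open>0 < b\<close>
    by (simp add: algebra_simps)
  ultimately show ?thesis
    using assms \<open>0 < a\<close> \<open>0 < b\<close> by (simp add: div_sign_odd_eq_mod)
qed

text \<open>For odd \<open>a\<close>, \<open>b\<close> the sign flips twice at a common multiple and once at any other multiple of \<open>a\<close> or \<open>b\<close>.\<close>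

lemma div_sign_jump:
  assumes "odd a" "odd b"
  shows "(of_bool (a dvd n) + of_bool (b dvd n)) * div_sign a b n
     = (div_sign a b n - div_sign a b (n - 1)) / 2 + 2 * of_bool (a dvd n \<and> b dvd n)"
proof (cases n)
  case (Suc m)
  have "Suc m div a = m div a + of_bool (a dvd Suc m)"
       "Suc m div b = m div b + of_bool (b dvd Suc m)"
    by (simp_all add: div_Suc dvd_eq_mod_eq_0)
  moreover have "a dvd n \<Longrightarrow> b dvd n \<Longrightarrow> div_sign a b n = 1"
    using assms by (simp add: div_sign_odd_eq_mod)
  ultimately show ?thesis
    using Suc by (auto simp: div_sign_def power_add)
qed (simp add: div_sign_def)

lemma sum_minus_one_power_odd:
  assumes "odd a"
  shows "(\<Sum>r<a. (-1::real) ^ r) = 1"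
proof -
  have "(\<Sum>r<2 * k + 1. (-1::real) ^ r) = 1" for k
    by (induction k) (auto simp: numeral_2_eq_2)
  with assms show ?thesis
    by (metis oddE)
qed

lemma bij_betw_mod_pair:
  fixes a b :: nat
  assumes "coprime a b" "0 < a" "0 < b"
  shows "bij_betw (\<lambda>n. (n mod a, n mod b)) {..<a * b} ({..<a} \<times> {..<b})"
proof -
  have inj: "inj_on (\<lambda>n. (n mod a, n mod b)) {..<a * b}"
  proof (rule inj_onI)
    fix x y
    assume "x \<in> {..<a * b}" "y \<in> {..<a * b}" "(x mod a, x mod b) = (y mod a, y mod b)"
    then have "[x = y] (mod a * b)" "x < a * b" "y < a * b"
      using coprime_cong_mult_nat[of x y a b] assms(1) by (auto simp: cong_def)
    then show "x = y"
      by (rule cong_less_modulus_unique_nat)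
  qed
  have "(\<lambda>n. (n mod a, n mod b)) ` {..<a * b} = {..<a} \<times> {..<b}"
  proof (rule card_subset_eq)
    show "(\<lambda>n. (n mod a, n mod b)) ` {..<a * b} \<subseteq> {..<a} \<times> {..<b}"
      using assms by auto
    show "card ((\<lambda>n. (n mod a, n mod b)) ` {..<a * b}) = card ({..<a} \<times> {..<b})"
      using card_image[OF inj] by (simp add: card_cartesian_product)
  qed simp
  with inj show ?thesis
    by (rule bij_betw_imageI)
qed

lemma sum_div_sign_coprime:
  assumes "odd a" "odd b" "coprime a b"
  shows "(\<Sum>n<a * b. div_sign a b n) = 1"
proof -
  have "0 < a" "0 < b"
    using assms by (auto intro: odd_pos)
  let ?g = "\<lambda>(r, s). (-1::real) ^ r * (-1) ^ s"
  have "(\<Sum>n<a * b. div_sign a b n) = (\<Sum>n<a * b. ?g (n mod a, n mod b))"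
    using assms by (simp add: div_sign_odd_eq_mod)
  also have "\<dots> = (\<Sum>p\<in>{..<a} \<times> {..<b}. ?g p)"
    using sum.reindex_bij_betw[OF bij_betw_mod_pair[OF assms(3) \<open>0 < a\<close> \<open>0 < b\<close>], of ?g]
    by simp
  also have "\<dots> = (\<Sum>r<a. (-1::real) ^ r) * (\<Sum>s<b. (-1::real) ^ s)"
    by (simp add: sum_product sum.cartesian_product)
  finally show ?thesis
    using assms by (simp add: sum_minus_one_power_odd)
qed

lemma sum_lessThan_mult_periodic:
  fixes f :: "nat \<Rightarrow> 'a::semiring_1"
  assumes "\<And>n. f (n + p) = f n"
  shows "(\<Sum>n<k * p. f n) = of_nat k * (\<Sum>n<p. f n)"
proof -
  have "f (m * p + i) = f i" for m i
  proof (induction m)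
    case (Suc m)
    then show ?case
      using assms[of "m * p + i"] by (simp add: add_ac)
  qed simp
  then have "(\<Sum>i\<in>{m * p..<m * p + p}. f i) = (\<Sum>n<p. f n)" for m
    using sum.shift_bounds_nat_ivl[of f 0 "m * p" p] by (simp add: atLeast0LessThan add.commute)
  then show ?thesis
    using sum.nat_group[of f p k] by simp
qed

lemma sum_lessThan_mult_div:
  fixes f :: "nat \<Rightarrow> 'a::semiring_1"
  shows "(\<Sum>n<d * k. f (n div d)) = of_nat d * (\<Sum>m<k. f m)"
proof -
  have "(\<Sum>n\<in>{m * d..<m * d + d}. f (n div d)) = of_nat d * f m" for m
  proof -
    have "(\<Sum>n\<in>{m * d..<m * d + d}. f (n div d)) = (\<Sum>n\<in>{m * d..<m * d + d}. f m)"
      by (intro sum.cong refl arg_cong[of _ _ f] div_nat_eqI) (auto simp: mult.commute)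
    then show ?thesis
      by simp
  qed
  then show ?thesis
    using sum.nat_group[of "\<lambda>n. f (n div d)" d k]
    by (simp add: mult.commute sum_distrib_left)
qed

lemma sum_div_sign:
  assumes "odd a" "odd b"
  shows "(\<Sum>n<a * b. div_sign a b n) = real (gcd a b) ^ 2"
proof -
  define d where "d = gcd a b"
  have "d \<noteq> 0"
    using assms unfolding d_def by auto
  then obtain a' b' where ab: "a = d * a'" "b = d * b'" and "coprime a' b'"
    unfolding d_def by (metis gcd_coprime_exists mult.commute)
  have odd': "odd a'" "odd b'"
    using assms ab by auto
  have "(\<Sum>n<a * b. div_sign a b n) = (\<Sum>n<d * (d * (a' * b')). div_sign a' b' (n div d))"
    unfolding ab div_sign_mult_scale by (simp add: ac_simps)
  also have "\<dots> = real d * (real d * (\<Sum>m<a' * b'. div_sign a' b' m))"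
    by (simp add: sum_lessThan_mult_div sum_lessThan_mult_periodic div_sign_periodic[OF odd'])
  also have "\<dots> = real d ^ 2"
    by (simp add: sum_div_sign_coprime[OF odd' \<open>coprime a' b'\<close>] power2_eq_square)
  finally show ?thesis
    unfolding d_def .
qed

lemma sum_lessThan_multiples:
  fixes g :: "nat \<Rightarrow> 'a::comm_monoid_add"
  assumes "0 < a"
  shows "(\<Sum>k<b. g (a * k)) = (\<Sum>n<a * b. if a dvd n then g n else 0)"
proof -
  have "{n \<in> {..<a * b}. a dvd n} = (\<lambda>k. a * k) ` {..<b}"
    using assms by (auto elim!: dvdE)
  then have "(\<Sum>n<a * b. if a dvd n then g n else 0) = sum g ((\<lambda>k. a * k) ` {..<b})"
    by (simp add: sum.inter_filter[symmetric])
  also have "\<dots> = (\<Sum>k<b. g (a * k))"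
    using assms by (simp add: sum.reindex inj_on_def)
  finally show ?thesis ..
qed

lemma s5_of_nat:
  assumes "0 < a" "0 < b"
  shows "s5 (int a) (int b)
    = (\<Sum>n<a * b. if a dvd n then div_sign a b n * sawtooth (real n / real (a * b)) else 0)"
proof -
  have "{0..<int b} = int ` {..<b}"
    by (simp add: image_int_atLeastLessThan atLeast0LessThan[symmetric])
  then have "s5 (int a) (int b) = (\<Sum>k<b. (-1) ^ nat (int k + \<lfloor>real_of_int (int a * int k) / real_of_int (int b)\<rfloor> mod 2)
      * sawtooth (real_of_int (int k) / real_of_int (int b)))"
    unfolding s5_def by (simp add: sum.reindex)
  also have "\<dots> = (\<Sum>k<b. div_sign a b (a * k) * sawtooth (real (a * k) / real (a * b)))"
  proof (rule sum.cong)
    fix k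
    have "\<lfloor>real_of_int (int a * int k) / real_of_int (int b)\<rfloor> = int (a * k div b)"
      by (metis floor_divide_of_int_eq of_int_of_nat_eq of_nat_mult zdiv_int)
    moreover have "int (a * k div b) mod 2 = int (a * k div b mod 2)"
      by (simp add: of_nat_mod)
    then have "nat (int k + int (a * k div b) mod 2) = k + a * k div b mod 2"
      by (simp add: nat_add_distrib)
    ultimately have "(-1::real) ^ nat (int k + \<lfloor>real_of_int (int a * int k) / real_of_int (int b)\<rfloor> mod 2)
        = (-1) ^ (k + a * k div b)"
      by (simp add: power_add minus_one_power_iff)
    then show "(-1) ^ nat (int k + \<lfloor>real_of_int (int a * int k) / real_of_int (int b)\<rfloor> mod 2)
        * sawtooth (real_of_int (int k) / real_of_int (int b))
        = div_sign a b (a * k) * sawtooth (real (a * k) / real (a * b))"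
      using assms by (simp add: div_sign_def)
  qed simp
  also have "\<dots> = (\<Sum>n<a * b. if a dvd n then div_sign a b n * sawtooth (real n / real (a * b)) else 0)"
    by (rule sum_lessThan_multiples[OF assms(1)])
  finally show ?thesis .
qed

lemma s5_add_s5:
  assumes "0 < a" "0 < b"
  shows "s5 (int a) (int b) + s5 (int b) (int a)
    = (\<Sum>n<a * b. (of_bool (a dvd n) + of_bool (b dvd n)) * div_sign a b n
                    * sawtooth (real n / real (a * b)))"
  unfolding s5_of_nat[OF assms] s5_of_nat[OF assms(2,1)] div_sign_commute[where a = a and b = b]
    mult.commute[of b a] sum.distrib[symmetric]
  by (rule sum.cong) (simp_all add: mult.commute)

lemma sawtooth_of_nat_div:
  assumes "n < N"
  shows "sawtooth (real n / real N) = (if n = 0 then 0 else real n / real N - 1/2)"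
proof (cases "n = 0")
  case False
  then have "0 < real n / real N" "real n / real N < 1"
    using assms by auto
  then have "frac (real n / real N) = real n / real N"
    by (simp add: frac_eq)
  moreover from this have "real n / real N \<notin> \<int>"
    using \<open>0 < real n / real N\<close> by (metis frac_eq_0_iff less_irrefl)
  ultimately show ?thesis
    using False by (simp add: sawtooth_def)
qed (simp add: sawtooth_def)

lemma sum_common_multiples_centered:
  assumes "0 < a" "0 < b"
  shows "(\<Sum>n<a * b. of_bool (a dvd n \<and> b dvd n) * (real n / real (a * b) - 1/2)) = -1/2"
proof -
  define N where "N = a * b"
  define g where "g n = of_bool (a dvd n \<and> b dvd n) * (real n / real N - 1/2)" for n
  have "0 < N"
    using assms unfolding N_def by simp
  have g_antisym: "g (N - n) = - g n" if "n \<le> N" for n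
  proof -
    have "a dvd N" "b dvd N"
      unfolding N_def by auto
    then have "(a dvd (N - n) \<and> b dvd (N - n)) = (a dvd n \<and> b dvd n)"
      using that by (metis dvd_diff_nat diff_diff_cancel)
    moreover have "real (N - n) / real N - 1/2 = - (real n / real N - 1/2)"
      using that \<open>0 < N\<close> by (simp add: of_nat_diff field_simps)
    ultimately show ?thesis
      unfolding g_def by simp
  qed
  have "sum g {0..N} = (\<Sum>n\<in>{0..N}. g (N + 0 - n))"
    by (rule sum.atLeastAtMost_rev)
  also have "\<dots> = - sum g {0..N}"
    by (simp add: g_antisym sum_negf)
  finally have "sum g {0..N} = 0"
    by simp
  moreover have "sum g {0..N} = sum g {..<N} + g N"
    by (simp add: atLeast0AtMost lessThan_Suc_atMost[symmetric])
  moreover have "g N = 1/2"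
    using \<open>0 < N\<close> unfolding g_def N_def by simp
  ultimately show ?thesis
    unfolding g_def N_def by simp
qed

text \<open>Abel summation against the centred weights \<open>n/N - 1/2\<close>; note \<open>f (0 - 1) = f 0\<close>.\<close>

lemma sum_jumps_centered:
  fixes f :: "nat \<Rightarrow> real"
  assumes "0 < N" "f (N - 1) = f 0"
  shows "(\<Sum>n<N. (f n - f (n - 1)) * (real n / real N - 1/2)) = f 0 - (\<Sum>n<N. f n) / real N"
proof -
  obtain M where N: "N = Suc M"
    using assms(1) gr0_implies_Suc by blast
  have by_parts: "(\<Sum>n<Suc M. (f n - f (n - 1)) * real n) = real M * f M - (\<Sum>n<M. f n)"
    by (induction M) (auto simp: algebra_simps)
  have telescope: "(\<Sum>n<Suc M. f n - f (n - 1)) = f M - f 0"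
    by (induction M) auto
  have "(\<Sum>n<N. (f n - f (n - 1)) * (real n / real N - 1/2))
      = (\<Sum>n<N. (f n - f (n - 1)) * real n / real N - (f n - f (n - 1)) / 2)"
    by (simp add: right_diff_distrib)
  also have "\<dots> = (\<Sum>n<Suc M. (f n - f (n - 1)) * real n) / real N - (\<Sum>n<Suc M. f n - f (n - 1)) / 2"
    unfolding N sum_divide_distrib by (rule sum_subtractf)
  also have "\<dots> = f 0 - (\<Sum>n<N. f n) / real N"
    unfolding by_parts telescope using assms N by (simp add: field_simps)
  finally show ?thesis .
qed

lemma sum_weighted_div_sign_sawtooth:
  assumes "odd a" "odd b"
  shows "(\<Sum>n<a * b. (of_bool (a dvd n) + of_bool (b dvd n)) * div_sign a b n
                  * sawtooth (real n / real (a * b)))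
       = 1/2 - (\<Sum>n<a * b. div_sign a b n) / (2 * real (a * b))"
proof -
  define N where "N = a * b"
  let ?h = "div_sign a b"
  let ?c = "\<lambda>n. real n / real N - 1/2"
  have "0 < a" "0 < b"
    using assms by (auto intro: odd_pos)
  then have "0 < N"
    unfolding N_def by simp
  then have sum_indicator_zero: "(\<Sum>n<N. of_bool (n = 0) :: real) = 1"
    by simp
  have jumps: "(\<Sum>n<N. (?h n - ?h (n - 1)) * ?c n) = 1 - (\<Sum>n<N. ?h n) / real N"
    using sum_jumps_centered[OF \<open>0 < N\<close>, of ?h] div_sign_pred_mult[OF assms]
    by (simp add: N_def div_sign_def)
  have common: "(\<Sum>n<N. of_bool (a dvd n \<and> b dvd n) * ?c n) = -1/2"
    unfolding N_def by (rule sum_common_multiples_centered[OF \<open>0 < a\<close> \<open>0 < b\<close>])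
  have "(\<Sum>n<N. (of_bool (a dvd n) + of_bool (b dvd n)) * ?h n * sawtooth (real n / real N))
      = (\<Sum>n<N. (of_bool (a dvd n) + of_bool (b dvd n)) * ?h n * ?c n + of_bool (n = 0))"
    by (rule sum.cong) (auto simp: sawtooth_of_nat_div div_sign_def)
  also have "\<dots> = (\<Sum>n<N. (?h n - ?h (n - 1)) * ?c n / 2
      + 2 * (of_bool (a dvd n \<and> b dvd n) * ?c n) + of_bool (n = 0))"
    by (simp only: div_sign_jump[OF assms]) (simp add: algebra_simps)
  also have "\<dots> = (\<Sum>n<N. (?h n - ?h (n - 1)) * ?c n) / 2
      + 2 * (\<Sum>n<N. of_bool (a dvd n \<and> b dvd n) * ?c n) + 1"
    by (simp only: sum.distrib sum_divide_distrib sum_distrib_left sum_indicator_zero)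
  also have "\<dots> = 1/2 - (\<Sum>n<N. ?h n) / (2 * real N)"
    unfolding jumps common using \<open>0 < N\<close> by (simp add: field_simps)
  finally show ?thesis
    unfolding N_def .
qed

theorem corollary1p2:
  fixes a b :: nat
  assumes "odd a" and "odd b"
  shows "s5 (int a) (int b) + s5 (int b) (int a)
           = 1/2 - (real (gcd a b))^2 / (2 * real a * real b)"
proof -
  have "0 < a" "0 < b"
    using assms by (auto intro: odd_pos)
  have "s5 (int a) (int b) + s5 (int b) (int a)
      = 1/2 - (\<Sum>n<a * b. div_sign a b n) / (2 * real (a * b))"
    unfolding s5_add_s5[OF \<open>0 < a\<close> \<open>0 < b\<close>] by (rule sum_weighted_div_sign_sawtooth[OF assms])
  also have "\<dots> = 1/2 - (real (gcd a b))^2 / (2 * real a * real b)"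
    by (simp add: sum_div_sign[OF assms] mult.assoc)
  finally show ?thesis .
qed

end
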